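(* Fix the uniform prior $P$ on $\{1,\dots,n\}^T$, a nonnegative utility function $u:\mathcal{Z}\times\mathcal{H}\to\mathbb{R}_+$, an amplitude $\lambda\ge0$ and a decay $\gamma\in(0,1)$. If Adaptive Sampling SGD is run for $T$ iterations, its posterior $Q$ satisfies $$D_{KL}(Q\|P)\le\frac{\lambda}{1-\gamma}\sum_{t=1}^{T-1}\mathbb{E}_{(i_1,\dots,i_t)\sim Q}\big[u(z_{i_t},h_t)\big].$$
   Context: Adaptive Sampling SGD: inputs are examples $(z_1,\dots,z_n)\in\mathcal{Z}^n$, an initial hypothesis $h_0\in\mathcal{H}$, update rules $G_t:\mathcal{H}\times\mathcal{Z}\to\mathcal{H}$, utility $u$, amplitude $\lambda$, decay $\gamma$. Initialize weights $w_1=\dots=w_n=1$. For $t=1,\dots,T$: draw $i_t$ with conditional probability $Q(i_t=i\mid i_1,\dots,i_{t-1})=w_i/\sum_{j=1}^nw_j$; set $h_t=G_t(h_{t-1},z_{i_t})$; update $w_{i_t}\leftarrow w_{i_t}^{\gamma}\exp(\lambda u(z_{i_t},h_t))$. Output $h_T$. The posterior $Q$ is the resulting distribution of $(i_1,\dots,i_T)$ on $\{1,\dots,n\}^T$ (so $h_t$ is a function of $(i_1,\dots,i_t)$); $D_{KL}(Q\|P)=\mathbb{E}_{Q}\ln(Q/P)$. *)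

theory Defs
  imports Complex_Main
begin

text \<open>Adaptive Sampling SGD. Examples are indexed by 0..<n (shift of 1..n).
  A history is the list [i_1,...,i_t] of sampled indices. G t is the update rule G_t (t = 1..T).\<close>

fun hyp_from :: "(nat \<Rightarrow> 'z) \<Rightarrow> (nat \<Rightarrow> 'h \<Rightarrow> 'z \<Rightarrow> 'h) \<Rightarrow> nat \<Rightarrow> 'h \<Rightarrow> nat list \<Rightarrow> 'h" where
  "hyp_from z G t h [] = h"
| "hyp_from z G t h (i # is) = hyp_from z G (Suc t) (G t h (z i)) is"

definition hyp :: "(nat \<Rightarrow> 'z) \<Rightarrow> 'h \<Rightarrow> (nat \<Rightarrow> 'h \<Rightarrow> 'z \<Rightarrow> 'h) \<Rightarrow> nat list \<Rightarrow> 'h" where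
  "hyp z h0 G xs = hyp_from z G 1 h0 xs"

fun weights_from :: "(nat \<Rightarrow> 'z) \<Rightarrow> (nat \<Rightarrow> 'h \<Rightarrow> 'z \<Rightarrow> 'h) \<Rightarrow> ('z \<Rightarrow> 'h \<Rightarrow> real) \<Rightarrow> real \<Rightarrow> real
     \<Rightarrow> nat \<Rightarrow> 'h \<Rightarrow> (nat \<Rightarrow> real) \<Rightarrow> nat list \<Rightarrow> (nat \<Rightarrow> real)" where
  "weights_from z G u lam gam t h w [] = w"
| "weights_from z G u lam gam t h w (i # is) =
     (let h' = G t h (z i)
      in weights_from z G u lam gam (Suc t) h'
           (w(i := (w i) powr gam * exp (lam * u (z i) h'))) is)"

definition weights :: "(nat \<Rightarrow> 'z) \<Rightarrow> 'h \<Rightarrow> (nat \<Rightarrow> 'h \<Rightarrow> 'z \<Rightarrow> 'h) \<Rightarrow> ('z \<Rightarrow> 'h \<Rightarrow> real)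
     \<Rightarrow> real \<Rightarrow> real \<Rightarrow> nat list \<Rightarrow> (nat \<Rightarrow> real)" where
  "weights z h0 G u lam gam xs = weights_from z G u lam gam 1 h0 (\<lambda>_. 1) xs"

text \<open>Posterior probability Q(i_1,...,i_T) of a full index sequence (chain rule of the
  conditional sampling probabilities w_i / sum_j w_j).\<close>
definition postQ :: "nat \<Rightarrow> (nat \<Rightarrow> 'z) \<Rightarrow> 'h \<Rightarrow> (nat \<Rightarrow> 'h \<Rightarrow> 'z \<Rightarrow> 'h) \<Rightarrow> ('z \<Rightarrow> 'h \<Rightarrow> real)
     \<Rightarrow> real \<Rightarrow> real \<Rightarrow> nat list \<Rightarrow> real" where
  "postQ n z h0 G u lam gam xs =
     (\<Prod>t<length xs. weights z h0 G u lam gam (take t xs) (xs ! t)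
                     / (\<Sum>j<n. weights z h0 G u lam gam (take t xs) j))"

definition seqs :: "nat \<Rightarrow> nat \<Rightarrow> nat list set" where
  "seqs n T = {xs. length xs = T \<and> set xs \<subseteq> {..<n}}"

definition priorP :: "nat \<Rightarrow> nat \<Rightarrow> nat list \<Rightarrow> real" where
  "priorP n T xs = 1 / real n ^ T"

definition KL_fin :: "'a set \<Rightarrow> ('a \<Rightarrow> real) \<Rightarrow> ('a \<Rightarrow> real) \<Rightarrow> real" where
  "KL_fin S Q P = (\<Sum>x\<in>S. if Q x = 0 then 0 else Q x * ln (Q x / P x))"

end

theory Submission
  imports Defs
begin

text \<open>Every weight stays \<open>\<ge> 1\<close>, so each normaliser \<open>\<Sum>\<^sub>j w\<^sub>j\<close> is at least \<open>n\<close> and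
  \<open>ln (Q/P) \<le> \<Sum>\<^sub>t ln w\<^sub>t\<^sub>-\<^sub>1(i\<^sub>t)\<close>: only the log-weights of the sampled indices matter.
  The total log-weight \<open>\<Psi>\<^sub>t = \<Sum>\<^sub>i ln w\<^sub>t(i)\<close> changes at step \<open>t\<close> by
  \<open>(\<gamma> - 1) ln w\<^sub>t\<^sub>-\<^sub>1(i\<^sub>t) + \<lambda> u\<^sub>t\<close>, so telescoping gives
  \<open>(1 - \<gamma>) \<Sum>\<^sub>t ln w\<^sub>t\<^sub>-\<^sub>1(i\<^sub>t) + \<Psi>\<^sub>T = \<lambda> \<Sum>\<^sub>t u\<^sub>t\<close>. As \<open>\<Psi>\<^sub>T \<ge> ln w\<^sub>T(i\<^sub>T) \<ge> \<lambda> u\<^sub>T\<close>,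
  the last utility drops out, and averaging over \<open>Q\<close> gives the bound.\<close>

lemma hyp_from_snoc:
  "hyp_from z G t h (xs @ [i]) = G (t + length xs) (hyp_from z G t h xs) (z i)"
  by (induction xs arbitrary: t h) auto

lemma weights_from_snoc:
  "weights_from z G u lam gam t h w (xs @ [i]) =
    (let w' = weights_from z G u lam gam t h w xs
     in w'(i := w' i powr gam * exp (lam * u (z i) (G (t + length xs) (hyp_from z G t h xs) (z i)))))"
  by (induction xs arbitrary: t h w) (auto simp: Let_def)

lemma hyp_snoc: "hyp z h0 G (xs @ [i]) = G (Suc (length xs)) (hyp z h0 G xs) (z i)"
  unfolding hyp_def by (simp add: hyp_from_snoc)

lemma weights_snoc:
  "weights z h0 G u lam gam (xs @ [i]) =
    (weights z h0 G u lam gam xs)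
      (i := weights z h0 G u lam gam xs i powr gam * exp (lam * u (z i) (hyp z h0 G (xs @ [i]))))"
  unfolding weights_def hyp_snoc by (simp add: weights_from_snoc Let_def hyp_def)

lemma weights_pos: "0 < weights z h0 G u lam gam xs i"
proof (induction xs arbitrary: i rule: rev_induct)
  case Nil
  then show ?case by (simp add: weights_def)
next
  case (snoc x xs)
  have "0 < weights z h0 G u lam gam xs x powr gam"
    using snoc.IH[of x] by simp
  with snoc show ?case by (simp add: weights_snoc)
qed

lemma one_le_weights:
  assumes "\<And>x h. u x h \<ge> 0" and "lam \<ge> 0" and "gam \<ge> 0"
  shows "1 \<le> weights z h0 G u lam gam xs i"
proof (induction xs arbitrary: i rule: rev_induct)
  case Nil
  then show ?case by (simp add: weights_def)
next
  case (snoc x xs)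
  have "1 \<le> weights z h0 G u lam gam xs x powr gam"
    using snoc assms(3) by (simp add: ge_one_powr_ge_zero)
  moreover have "1 \<le> exp (lam * u (z x) (hyp z h0 G (xs @ [x])))"
    using assms(1,2) by simp
  ultimately have "1 * 1 \<le> weights z h0 G u lam gam xs x powr gam * exp (lam * u (z x) (hyp z h0 G (xs @ [x])))"
    by (intro mult_mono) auto
  with snoc show ?case by (simp add: weights_snoc)
qed

lemma ln_weights_snoc:
  "ln (weights z h0 G u lam gam (xs @ [x]) i) = ln (weights z h0 G u lam gam xs i)
     + (if i = x then (gam - 1) * ln (weights z h0 G u lam gam xs x)
                      + lam * u (z x) (hyp z h0 G (xs @ [x]))
        else 0)"
  using weights_pos[of z h0 G u lam gam xs x]
  by (simp add: weights_snoc ln_mult algebra_simps)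

lemma sum_ln_weights_snoc:
  assumes "x < n"
  shows "(\<Sum>i<n. ln (weights z h0 G u lam gam (xs @ [x]) i))
    = (\<Sum>i<n. ln (weights z h0 G u lam gam xs i))
      + (gam - 1) * ln (weights z h0 G u lam gam xs x) + lam * u (z x) (hyp z h0 G (xs @ [x]))"
  using assms by (simp add: ln_weights_snoc sum.distrib)

lemma ln_weights_potential:
  assumes "set ys \<subseteq> {..<n}"
  shows "(1 - gam) * (\<Sum>t<length ys. ln (weights z h0 G u lam gam (take t ys) (ys ! t)))
      + (\<Sum>i<n. ln (weights z h0 G u lam gam ys i))
    = lam * (\<Sum>t=1..length ys. u (z (ys ! (t - 1))) (hyp z h0 G (take t ys)))"
  using assms
proof (induction ys rule: rev_induct)
  case Nil
  then show ?case by (simp add: weights_def)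
next
  case (snoc x ys)
  let ?W = "weights z h0 G u lam gam"
  have chosen: "(\<Sum>t<length (ys @ [x]). ln (?W (take t (ys @ [x])) ((ys @ [x]) ! t)))
      = (\<Sum>t<length ys. ln (?W (take t ys) (ys ! t))) + ln (?W ys x)"
  proof -
    have "(\<Sum>t<length ys. ln (?W (take t (ys @ [x])) ((ys @ [x]) ! t)))
        = (\<Sum>t<length ys. ln (?W (take t ys) (ys ! t)))"
      by (rule sum.cong) (auto simp: nth_append)
    then show ?thesis by simp
  qed
  have utilities: "(\<Sum>t=1..length (ys @ [x]). u (z ((ys @ [x]) ! (t - 1))) (hyp z h0 G (take t (ys @ [x]))))
      = (\<Sum>t=1..length ys. u (z (ys ! (t - 1))) (hyp z h0 G (take t ys)))
        + u (z x) (hyp z h0 G (ys @ [x]))"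
  proof -
    have "(\<Sum>t=1..length ys. u (z ((ys @ [x]) ! (t - 1))) (hyp z h0 G (take t (ys @ [x]))))
        = (\<Sum>t=1..length ys. u (z (ys ! (t - 1))) (hyp z h0 G (take t ys)))"
      by (rule sum.cong) (auto simp: nth_append)
    then show ?thesis by simp
  qed
  have "x < n" and "set ys \<subseteq> {..<n}" using snoc.prems by simp_all
  with snoc.IH show ?case
    unfolding chosen utilities by (simp add: sum_ln_weights_snoc algebra_simps)
qed

lemma sum_ln_chosen_weights_le:
  assumes "\<And>x h. u x h \<ge> 0" and "lam \<ge> 0" and "0 < gam" and "gam < 1"
    and "xs \<in> seqs n T"
  shows "(\<Sum>t<T. ln (weights z h0 G u lam gam (take t xs) (xs ! t)))
    \<le> lam / (1 - gam) * (\<Sum>t=1..T-1. u (z (xs ! (t - 1))) (hyp z h0 G (take t xs)))"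
proof (cases T)
  case 0
  then show ?thesis by simp
next
  case (Suc T')
  let ?W = "weights z h0 G u lam gam"
  have len: "length xs = T" and idx: "set xs \<subseteq> {..<n}"
    using assms(5) by (auto simp: seqs_def)
  obtain ys x where xs: "xs = ys @ [x]"
    using len Suc by (metis length_0_conv nat.distinct(1) rev_exhaust)
  have "x < n" using idx xs by simp
  have W_ge_1: "\<And>ys i. 1 \<le> ?W ys i"
    by (rule one_le_weights) (use assms in auto)
  have "0 \<le> gam * ln (?W ys x)"
    using W_ge_1[of ys x] assms(3) by simp
  then have "lam * u (z x) (hyp z h0 G xs) \<le> ln (?W xs x)"
    by (simp add: xs ln_weights_snoc algebra_simps)
  also have "\<dots> \<le> (\<Sum>i<n. ln (?W xs i))"
    using \<open>x < n\<close> W_ge_1 by (intro member_le_sum) auto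
  finally have "lam * u (z x) (hyp z h0 G xs) \<le> (\<Sum>i<n. ln (?W xs i))" .
  moreover have "(\<Sum>t=1..T. u (z (xs ! (t - 1))) (hyp z h0 G (take t xs)))
      = (\<Sum>t=1..T-1. u (z (xs ! (t - 1))) (hyp z h0 G (take t xs))) + u (z x) (hyp z h0 G xs)"
    using Suc len xs by (simp add: sum.cl_ivl_Suc nth_append)
  ultimately have "(1 - gam) * (\<Sum>t<T. ln (?W (take t xs) (xs ! t)))
      \<le> lam * (\<Sum>t=1..T-1. u (z (xs ! (t - 1))) (hyp z h0 G (take t xs)))"
    using ln_weights_potential[OF idx, of gam z h0 G u lam] len by (simp add: distrib_left)
  then show ?thesis
    using assms(4) by (simp add: pos_le_divide_eq mult.commute)
qed

lemma scaled_share_le: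
  fixes w :: "nat \<Rightarrow> real"
  assumes "\<And>j. j < n \<Longrightarrow> 1 \<le> w j" and "0 \<le> w i"
  shows "real n * (w i / (\<Sum>j<n. w j)) \<le> w i"
proof (cases "n = 0")
  case False
  have "real n \<le> (\<Sum>j<n. w j)"
    using sum_mono[of "{..<n}" "\<lambda>_. 1::real" w] assms(1) by simp
  then have "real n * w i \<le> (\<Sum>j<n. w j) * w i"
    using assms(2) by (rule mult_right_mono)
  moreover have "0 < (\<Sum>j<n. w j)"
    using False \<open>real n \<le> (\<Sum>j<n. w j)\<close> by linarith
  ultimately show ?thesis by (simp add: pos_divide_le_eq algebra_simps)
qed (use assms(2) in simp)

lemma ln_posterior_prior_ratio_le_sum_ln_weights:
  assumes "\<And>x h. u x h \<ge> 0" and "lam \<ge> 0" and "gam \<ge> 0"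
    and "xs \<in> seqs n T"
  shows "ln (postQ n z h0 G u lam gam xs / priorP n T xs)
    \<le> (\<Sum>t<T. ln (weights z h0 G u lam gam (take t xs) (xs ! t)))"
proof -
  let ?W = "weights z h0 G u lam gam"
  let ?share = "\<lambda>t. real n * (?W (take t xs) (xs ! t) / (\<Sum>j<n. ?W (take t xs) j))"
  have len: "length xs = T" and idx: "set xs \<subseteq> {..<n}"
    using assms(4) by (auto simp: seqs_def)
  have "0 < n \<or> T = 0"
    using len idx by (cases xs) auto
  then have share_pos: "0 < ?share t" if "t < T" for t
    using that weights_pos[of z h0 G u lam gam]
    by (auto intro!: mult_pos_pos divide_pos_pos sum_pos)
  have "postQ n z h0 G u lam gam xs / priorP n T xs = real n ^ T * postQ n z h0 G u lam gam xs"
    by (simp add: priorP_def)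
  also have "\<dots> = (\<Prod>t<T. ?share t)"
    unfolding postQ_def len prod.distrib by simp
  finally have "ln (postQ n z h0 G u lam gam xs / priorP n T xs) = ln (\<Prod>t<T. ?share t)"
    by simp
  also have "\<dots> = (\<Sum>t<T. ln (?share t))"
    by (rule ln_prod) (use share_pos in force)+
  also have "\<dots> \<le> (\<Sum>t<T. ln (?W (take t xs) (xs ! t)))"
  proof (rule sum_mono)
    fix t assume "t \<in> {..<T}"
    have "?share t \<le> ?W (take t xs) (xs ! t)"
      using one_le_weights[OF assms(1-3)] weights_pos[of z h0 G u lam gam]
      by (intro scaled_share_le) (auto intro: less_imp_le)
    moreover have "0 < ?share t"
      using share_pos \<open>t \<in> {..<T}\<close> by blast
    ultimately show "ln (?share t) \<le> ln (?W (take t xs) (xs ! t))"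
      by (subst ln_le_cancel_iff) (auto intro: weights_pos)
  qed
  finally show ?thesis .
qed

lemma postQ_nonneg: "0 \<le> postQ n z h0 G u lam gam xs"
  unfolding postQ_def
  using weights_pos[of z h0 G u lam gam]
  by (intro prod_nonneg divide_nonneg_nonneg sum_nonneg) (auto intro: less_imp_le)

lemma ln_posterior_prior_ratio_le_utilities:
  assumes "\<And>x h. u x h \<ge> 0" and "lam \<ge> 0" and "0 < gam" and "gam < 1"
    and "xs \<in> seqs n T"
  shows "ln (postQ n z h0 G u lam gam xs / priorP n T xs)
    \<le> lam / (1 - gam) * (\<Sum>t=1..T-1. u (z (xs ! (t - 1))) (hyp z h0 G (take t xs)))"
  using ln_posterior_prior_ratio_le_sum_ln_weights[OF assms(1,2) less_imp_le[OF assms(3)] assms(5)]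
    sum_ln_chosen_weights_le[OF assms] by (rule order_trans)

lemma KL_summand_le:
  fixes q p b :: real
  assumes "0 \<le> q" and "ln (q / p) \<le> b" and "0 \<le> b"
  shows "(if q = 0 then 0 else q * ln (q / p)) \<le> q * b"
  using assms by (simp add: mult_left_mono)

theorem theorem5:
  fixes n T :: nat and z :: "nat \<Rightarrow> 'z" and h0 :: 'h
    and G :: "nat \<Rightarrow> 'h \<Rightarrow> 'z \<Rightarrow> 'h" and u :: "'z \<Rightarrow> 'h \<Rightarrow> real"
    and lam gam :: real
  assumes "\<And>x h. u x h \<ge> 0"
    and "lam \<ge> 0" and "0 < gam" and "gam < 1"
  shows "KL_fin (seqs n T) (postQ n z h0 G u lam gam) (priorP n T)
     \<le> lam / (1 - gam) *
        (\<Sum>t=1..T-1. \<Sum>xs\<in>seqs n T.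
            postQ n z h0 G u lam gam xs * u (z (xs ! (t - 1))) (hyp z h0 G (take t xs)))"
proof -
  have "KL_fin (seqs n T) (postQ n z h0 G u lam gam) (priorP n T)
     \<le> (\<Sum>xs\<in>seqs n T. postQ n z h0 G u lam gam xs * (lam / (1 - gam) *
        (\<Sum>t=1..T-1. u (z (xs ! (t - 1))) (hyp z h0 G (take t xs)))))"
    unfolding KL_fin_def using assms
    by (intro sum_mono KL_summand_le postQ_nonneg ln_posterior_prior_ratio_le_utilities
        mult_nonneg_nonneg sum_nonneg) simp_all
  also have "\<dots> = lam / (1 - gam) *
        (\<Sum>t=1..T-1. \<Sum>xs\<in>seqs n T.
            postQ n z h0 G u lam gam xs * u (z (xs ! (t - 1))) (hyp z h0 G (take t xs)))"
    by (simp add: sum_distrib_left sum.swap[of _ "seqs n T"] algebra_simps)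
  finally show ?thesis .
qed

end
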